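(* Let $G$ be a finite, simple, connected graph of order at least four with $\dim_{wt}(G)=2$, and let $\{u,v\}$ be a weak total metric basis of $G$. Then $u$ and $v$ are not twins in $G$. In fact, $G$ has no twin.
   Context: $d(x,y)$ is the shortest-path distance and $N(x)$ the set of neighbors of $x$. A set $W\subseteq V(G)$ is a resolving set if for every two distinct vertices $y,z$ there is $x\in W$ with $d(y,x)\ne d(z,x)$. A set $W$ is a weak total resolving set (WTR-set) if $W$ is resolving and, for every $w\in W$ and every $x\in V(G)\setminus W$, there is $w'\in W\setminus\{w\}$ with $d(x,w')\ne d(w,w')$. $\dim_{wt}(G)$ is the minimum cardinality of a WTR-set, and a weak total metric basis is a WTR-set of that cardinality. Two distinct vertices $u,v$ are twins if $N(u)\setminus\{v\}=N(v)\setminus\{u\}$; a vertex $u$ is a twin (and $G$ has a twin) if there exists $v\ne u$ such that $u,v$ are twins. *)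

theory Defs
  imports Main
begin

definition simple_graph :: "'a set \<Rightarrow> ('a \<Rightarrow> 'a \<Rightarrow> bool) \<Rightarrow> bool" where
  "simple_graph V E \<longleftrightarrow> finite V \<and> (\<forall>x y. E x y \<longrightarrow> x \<in> V \<and> y \<in> V)
     \<and> (\<forall>x y. E x y \<longrightarrow> E y x) \<and> (\<forall>x. \<not> E x x)"

inductive walk_len :: "('a \<Rightarrow> 'a \<Rightarrow> bool) \<Rightarrow> 'a \<Rightarrow> 'a \<Rightarrow> nat \<Rightarrow> bool" for E where
  walk_nil: "walk_len E x x 0"
| walk_cons: "E x y \<Longrightarrow> walk_len E y z n \<Longrightarrow> walk_len E x z (Suc n)"

definition connected_graph :: "'a set \<Rightarrow> ('a \<Rightarrow> 'a \<Rightarrow> bool) \<Rightarrow> bool" where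
  "connected_graph V E \<longleftrightarrow> (\<forall>x\<in>V. \<forall>y\<in>V. \<exists>n. walk_len E x y n)"

definition dist :: "('a \<Rightarrow> 'a \<Rightarrow> bool) \<Rightarrow> 'a \<Rightarrow> 'a \<Rightarrow> nat" where
  "dist E x y = (LEAST n. walk_len E x y n)"

definition nbhd :: "('a \<Rightarrow> 'a \<Rightarrow> bool) \<Rightarrow> 'a \<Rightarrow> 'a set" where
  "nbhd E x = {y. E x y}"

definition resolving_set :: "'a set \<Rightarrow> ('a \<Rightarrow> 'a \<Rightarrow> bool) \<Rightarrow> 'a set \<Rightarrow> bool" where
  "resolving_set V E W \<longleftrightarrow> W \<subseteq> V \<and>
     (\<forall>y\<in>V. \<forall>z\<in>V. y \<noteq> z \<longrightarrow> (\<exists>x\<in>W. dist E y x \<noteq> dist E z x))"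

definition wtr_set :: "'a set \<Rightarrow> ('a \<Rightarrow> 'a \<Rightarrow> bool) \<Rightarrow> 'a set \<Rightarrow> bool" where
  "wtr_set V E W \<longleftrightarrow> resolving_set V E W \<and>
     (\<forall>w\<in>W. \<forall>x\<in>V - W. \<exists>w'\<in>W - {w}. dist E x w' \<noteq> dist E w w')"

definition dim_wt :: "'a set \<Rightarrow> ('a \<Rightarrow> 'a \<Rightarrow> bool) \<Rightarrow> nat" where
  "dim_wt V E = (LEAST k. \<exists>W. wtr_set V E W \<and> card W = k)"

definition wt_metric_basis :: "'a set \<Rightarrow> ('a \<Rightarrow> 'a \<Rightarrow> bool) \<Rightarrow> 'a set \<Rightarrow> bool" where
  "wt_metric_basis V E W \<longleftrightarrow> wtr_set V E W \<and> card W = dim_wt V E"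

definition twins :: "'a set \<Rightarrow> ('a \<Rightarrow> 'a \<Rightarrow> bool) \<Rightarrow> 'a \<Rightarrow> 'a \<Rightarrow> bool" where
  "twins V E u v \<longleftrightarrow> u \<in> V \<and> v \<in> V \<and> u \<noteq> v \<and> nbhd E u - {v} = nbhd E v - {u}"

definition is_twin :: "'a set \<Rightarrow> ('a \<Rightarrow> 'a \<Rightarrow> bool) \<Rightarrow> 'a \<Rightarrow> bool" where
  "is_twin V E u \<longleftrightarrow> (\<exists>v. twins V E u v)"

end

theory Submission
  imports Defs
begin

text \<open>Twins \<open>x, y\<close> are at equal distance from every third vertex, so any resolving set
  contains one of them, and the weak total condition forbids a two-element basis from containing
  exactly one of them. Hence a twin pair would be the basis \<open>{u, v}\<close> itself. Then \<open>u, v\<close> have a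
  common neighbour \<open>a\<close>, so \<open>d(u, v) = 2\<close>, and the remaining vertices (there is one, as \<open>|V| \<ge> 4\<close>)
  all lie at distance at least 3 from \<open>u\<close>: distance 1 would not be resolved from \<open>a\<close>, and
  distance 2 violates the weak total condition at \<open>u\<close>. They therefore form a union of components
  of \<open>G\<close> not containing \<open>u\<close>, contradicting connectedness.\<close>

lemma walk_len_snoc: "walk_len E x y n \<Longrightarrow> E y z \<Longrightarrow> walk_len E x z (Suc n)"
  by (induction rule: walk_len.induct) (auto intro: walk_len.intros)

lemma walk_len_converse:
  "walk_len E x y n \<Longrightarrow> (\<And>a b. E a b \<Longrightarrow> E b a) \<Longrightarrow> walk_len E y x n"
  by (induction rule: walk_len.induct) (auto intro: walk_len.intros walk_len_snoc)

lemma walk_len_0_eq: "walk_len E x y 0 \<Longrightarrow> x = y"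
  by (erule walk_len.cases) auto

lemma walk_len_2: "E x a \<Longrightarrow> E a y \<Longrightarrow> walk_len E x y 2"
  by (auto intro!: walk_len.intros simp: numeral_2_eq_2)

lemma walk_len_closed:
  "walk_len E x y n \<Longrightarrow> (\<And>p q. p \<in> S \<Longrightarrow> E p q \<Longrightarrow> q \<in> S) \<Longrightarrow> x \<in> S \<Longrightarrow> y \<in> S"
  by (induction rule: walk_len.induct) auto

lemma dist_le: "walk_len E x y n \<Longrightarrow> dist E x y \<le> n"
  unfolding dist_def by (rule Least_le)

lemma walk_len_dist: "walk_len E x y n \<Longrightarrow> walk_len E x y (dist E x y)"
  unfolding dist_def by (rule LeastI)

lemma dist_pos:
  assumes "walk_len E x y n" "x \<noteq> y" shows "0 < dist E x y"
proof (rule ccontr)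
  assume "\<not> 0 < dist E x y"
  hence "walk_len E x y 0" using walk_len_dist[OF assms(1)] by simp
  thus False using walk_len_0_eq assms(2) by metis
qed

lemma dist_edge:
  assumes "E x y" "x \<noteq> y" shows "dist E x y = 1"
proof -
  have "walk_len E x y 1" using assms(1) by (auto intro: walk_len.intros)
  with dist_le[OF this] dist_pos[OF this assms(2)] show ?thesis by linarith
qed

lemma exists_not_in_list:
  assumes "length xs < card V" shows "\<exists>x\<in>V. x \<notin> set xs"
proof (rule ccontr)
  assume "\<not> (\<exists>x\<in>V. x \<notin> set xs)"
  then have "V \<subseteq> set xs" by blast
  from card_mono[OF finite_set this] card_length[of xs] assms show False by simp
qed

lemma twins_sym: "twins V E u v \<Longrightarrow> twins V E v u"
  unfolding twins_def by auto

locale connected_simple_graph =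
  fixes V :: "'a set" and E :: "'a \<Rightarrow> 'a \<Rightarrow> bool"
  assumes simple: "simple_graph V E" and connected: "connected_graph V E"
begin

lemma edge_sym: "E x y \<Longrightarrow> E y x"
  using simple unfolding simple_graph_def by blast

lemma edge_irrefl: "\<not> E x x"
  using simple unfolding simple_graph_def by blast

lemma edge_in_V: "E x y \<Longrightarrow> x \<in> V \<and> y \<in> V"
  using simple unfolding simple_graph_def by blast

lemma walk_len_exists: "x \<in> V \<Longrightarrow> y \<in> V \<Longrightarrow> \<exists>n. walk_len E x y n"
  using connected unfolding connected_graph_def by blast

lemma dist_sym:
  assumes "x \<in> V" "y \<in> V" shows "dist E x y = dist E y x"
proof -
  obtain n where n: "walk_len E x y n" using walk_len_exists assms by blast
  have "walk_len E y x (dist E x y)"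
    using walk_len_converse[OF walk_len_dist[OF n]] edge_sym by blast
  moreover have "walk_len E x y (dist E y x)"
    using walk_len_converse[OF walk_len_dist[OF walk_len_converse[OF n]]] edge_sym by blast
  ultimately have "dist E y x \<le> dist E x y" "dist E x y \<le> dist E y x" by (blast intro: dist_le)+
  thus ?thesis by simp
qed

text \<open>The second vertex \<open>t\<close> of a shortest walk from \<open>v\<close> to \<open>z\<close> is either \<open>u\<close> itself or, being
  a neighbour of \<open>v\<close> other than \<open>u\<close>, also a neighbour of \<open>u\<close>.\<close>
lemma twins_dist_le:
  assumes tw: "twins V E u v" and z: "z \<in> V" "z \<noteq> u" "z \<noteq> v"
  shows "dist E u z \<le> dist E v z"
proof -
  have vV: "v \<in> V" and nb: "nbhd E u - {v} = nbhd E v - {u}"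
    using tw unfolding twins_def by auto
  obtain m where "walk_len E v z m" using walk_len_exists z vV by blast
  hence w: "walk_len E v z (dist E v z)" by (rule walk_len_dist)
  obtain n where n: "dist E v z = Suc n"
    using dist_pos[OF w] z(3) by (metis gr0_implies_Suc)
  obtain t where t: "E v t" "walk_len E t z n"
    using w unfolding n by (cases rule: walk_len.cases) auto
  show ?thesis
  proof (cases "t = u")
    case True
    thus ?thesis using dist_le[OF t(2)] n by simp
  next
    case False
    have "t \<noteq> v" using t(1) edge_irrefl by auto
    hence "E u t" using nb t(1) False unfolding nbhd_def by auto
    thus ?thesis using dist_le[OF walk_len.walk_cons[OF _ t(2)]] n by simp
  qed
qed

lemma twins_dist_eq:
  assumes tw: "twins V E u v" and z: "z \<in> V" "z \<noteq> u" "z \<noteq> v"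
  shows "dist E z u = dist E z v"
proof -
  have "u \<in> V" "v \<in> V" using tw unfolding twins_def by auto
  moreover have "dist E u z = dist E v z"
    using twins_dist_le[OF tw z] twins_dist_le[OF twins_sym[OF tw] z(1,3,2)] by simp
  ultimately show ?thesis using dist_sym[OF z(1)] by simp
qed

lemma resolving_set_meets_twins:
  assumes res: "resolving_set V E W" and tw: "twins V E x y"
  shows "x \<in> W \<or> y \<in> W"
proof (rule ccontr)
  assume out: "\<not> (x \<in> W \<or> y \<in> W)"
  have "x \<in> V" "y \<in> V" "x \<noteq> y" using tw unfolding twins_def by auto
  then obtain w where w: "w \<in> W" "dist E x w \<noteq> dist E y w"
    using res unfolding resolving_set_def by blast
  have wV: "w \<in> V" using res w(1) unfolding resolving_set_def by auto
  have "w \<noteq> x" "w \<noteq> y" using out w(1) by auto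
  hence "dist E w x = dist E w y" using twins_dist_eq[OF tw wV] by blast
  thus False using w(2) dist_sym[OF \<open>x \<in> V\<close> wV] dist_sym[OF \<open>y \<in> V\<close> wV] by simp
qed

lemma wtr_pair_dist_ne:
  assumes "wtr_set V E {u, v}" "u \<noteq> v" "x \<in> V" "x \<notin> {u, v}"
  shows "dist E x v \<noteq> dist E u v"
proof -
  have "\<exists>w'\<in>{u, v} - {u}. dist E x w' \<noteq> dist E u w'"
    using assms(1,3,4) unfolding wtr_set_def by blast
  moreover have "{u, v} - {u} = {v}" using assms(2) by auto
  ultimately show ?thesis by simp
qed

lemma wtr_pair_twin_in_pair:
  assumes wtr: "wtr_set V E {u, v}" and uv: "u \<noteq> v"
    and tw: "twins V E x y" and x: "x \<in> {u, v}"
  shows "y \<in> {u, v}"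
proof (rule ccontr)
  assume y: "y \<notin> {u, v}"
  obtain w where w: "{u, v} = {x, w}" "w \<noteq> x" using x uv by auto
  have xV: "x \<in> V" and yV: "y \<in> V" using tw unfolding twins_def by auto
  have wV: "w \<in> V" using wtr w(1) unfolding wtr_set_def resolving_set_def by auto
  have "dist E y w \<noteq> dist E x w"
    using wtr_pair_dist_ne[of x w y] wtr w y yV by auto
  moreover have "dist E w x = dist E w y" using twins_dist_eq[OF tw wV] w y by auto
  ultimately show False using dist_sym[OF xV wV] dist_sym[OF yV wV] by simp
qed

lemma edge_closed_set_contains:
  assumes "x \<in> V" "x \<in> S" "y \<in> V" and closed: "\<And>p q. p \<in> S \<Longrightarrow> E p q \<Longrightarrow> q \<in> S"
  shows "y \<in> S"
proof -
  obtain n where "walk_len E x y n" using walk_len_exists[OF assms(1,3)] ..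
  from walk_len_closed[OF this closed assms(2)] show ?thesis .
qed

lemma twins_common_neighbour:
  assumes tw: "twins V E u v" and card3: "card V \<ge> 3"
  shows "\<exists>a\<in>V. a \<noteq> u \<and> a \<noteq> v \<and> E a u \<and> E a v"
proof (rule ccontr)
  assume none: "\<not> ?thesis"
  have uV: "u \<in> V" and nb: "nbhd E u - {v} = nbhd E v - {u}"
    using tw unfolding twins_def by auto
  have twE: "z \<noteq> u \<Longrightarrow> z \<noteq> v \<Longrightarrow> E z u \<longleftrightarrow> E z v" for z
    using nb edge_sym unfolding nbhd_def by blast
  have "length [u, v] < card V" using card3 by simp
  then obtain z where z: "z \<in> V" "z \<notin> set [u, v]" using exists_not_in_list by blast
  have "p \<in> V - {u, v} \<Longrightarrow> E p q \<Longrightarrow> q \<in> V - {u, v}" for p q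
    using none twE edge_in_V by blast
  from edge_closed_set_contains[of z "V - {u, v}" u, OF z(1) _ uV this] z show False by simp
qed

lemma twins_wtr_pair_far:
  assumes tw: "twins V E u v" and wtr: "wtr_set V E {u, v}"
    and a: "a \<in> V" "a \<notin> {u, v}" "E a u" "E a v"
    and c: "c \<in> V" "c \<notin> {u, v, a}"
  shows "3 \<le> dist E c u \<and> dist E c u = dist E c v"
proof -
  have uV: "u \<in> V" and uv: "u \<noteq> v" using tw unfolding twins_def by auto
  have dau: "dist E a u = 1" and dav: "dist E a v = 1" using dist_edge a by auto
  have duv: "dist E u v = 2"
  proof -
    have "walk_len E u v 2" using walk_len_2[of E u a v, OF edge_sym[OF a(3)] a(4)] .
    hence "dist E u v \<le> 2" "0 < dist E u v" using dist_le dist_pos[OF _ uv] by simp_all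
    moreover have "dist E u v \<noteq> 1" using wtr_pair_dist_ne[OF wtr uv a(1,2)] dav by simp
    ultimately show ?thesis by linarith
  qed
  have eq: "dist E c u = dist E c v" using twins_dist_eq[OF tw c(1)] c(2) by simp
  have "\<exists>w\<in>{u, v}. dist E c w \<noteq> dist E a w"
    using wtr c a(1) unfolding wtr_set_def resolving_set_def by auto
  hence "dist E c u \<noteq> 1" using eq dau dav by auto
  moreover have "dist E c u \<noteq> 2" using wtr_pair_dist_ne[OF wtr uv c(1)] c(2) duv eq by simp
  moreover obtain n where "walk_len E c u n" using walk_len_exists[OF c(1) uV] ..
  then have "dist E c u \<noteq> 0" using dist_pos[of E c u n] c(2) by simp
  ultimately show ?thesis using eq by simp
qed

lemma twins_not_wtr_pair:
  assumes tw: "twins V E u v" and card4: "card V \<ge> 4"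
  shows "\<not> wtr_set V E {u, v}"
proof
  assume wtr: "wtr_set V E {u, v}"
  have uV: "u \<in> V" using tw unfolding twins_def by auto
  have "card V \<ge> 3" using card4 by simp
  then obtain a where a: "a \<in> V" "a \<notin> {u, v}" "E a u" "E a v"
    using twins_common_neighbour[OF tw] by auto
  define S where "S = V - {u, v, a}"
  note far = twins_wtr_pair_far[OF tw wtr a]
  have closed: "q \<in> S" if p: "p \<in> S" and e: "E p q" for p q
  proof -
    have pV: "p \<in> V" "p \<notin> {u, v, a}" using p S_def by auto
    have "p \<noteq> q" using e edge_irrefl by blast
    hence "dist E p q = 1" using dist_edge[of E p q, OF e] by blast
    hence "q \<noteq> u" "q \<noteq> v" using far[OF pV] by auto
    moreover have "q \<noteq> a"
    proof
      assume "q = a"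
      with e have "walk_len E p u 2" using walk_len_2[of E p a u] a(3) by simp
      thus False using far[OF pV] dist_le[of E p u 2] by simp
    qed
    ultimately show ?thesis using edge_in_V[OF e] S_def by auto
  qed
  have "length [u, v, a] < card V" using card4 by simp
  then obtain b where "b \<in> V" "b \<notin> set [u, v, a]" using exists_not_in_list by blast
  hence "b \<in> V" "b \<in> S" unfolding S_def by simp_all
  from edge_closed_set_contains[OF this uV closed] show False unfolding S_def by simp
qed

end

theorem proposition4:
  fixes V :: "'a set" and E :: "'a \<Rightarrow> 'a \<Rightarrow> bool" and u v :: 'a
  assumes "simple_graph V E"
    and "connected_graph V E"
    and "card V \<ge> 4"
    and "dim_wt V E = 2"
    and "wt_metric_basis V E {u, v}"
  shows "\<not> twins V E u v \<and> (\<forall>x\<in>V. \<not> is_twin V E x)"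
proof -
  interpret connected_simple_graph V E using assms(1,2) by unfold_locales
  have wtr: "wtr_set V E {u, v}" and "card {u, v} = 2"
    using assms(4,5) unfolding wt_metric_basis_def by auto
  hence uv: "u \<noteq> v" by auto
  have no_twins: "\<not> twins V E x y" for x y
  proof
    assume tw: "twins V E x y"
    have "x \<noteq> y" using tw unfolding twins_def by auto
    have "x \<in> {u, v} \<or> y \<in> {u, v}"
      using resolving_set_meets_twins wtr tw unfolding wtr_set_def by blast
    hence "x \<in> {u, v}" "y \<in> {u, v}"
      using wtr_pair_twin_in_pair[OF wtr uv tw] wtr_pair_twin_in_pair[OF wtr uv twins_sym[OF tw]]
      by blast+
    with \<open>x \<noteq> y\<close> uv have "{x, y} = {u, v}" by auto
    thus False
      using twins_not_wtr_pair[OF tw assms(3)] wtr by simp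
  qed
  thus ?thesis unfolding is_twin_def by auto
qed

end
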